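(* Consider problem (PI): minimize $f(x)$ subject to $x\in X$, $g_i(x)\le 0$, $i=1,\dots,m$, where $\Gamma\subseteq\mathbb R^n$ is an open convex set, $X\subseteq\Gamma$ is convex (not necessarily open), and $f,g_1,\dots,g_m:\Gamma\to\mathbb R$ are differentiable and quasiconvex on $\Gamma$. Let $\bar S$ be the solution set of (PI) and $\bar x\in\bar S$. Suppose GMFCQ holds at $\bar x$ and $\lambda=(\lambda_1,\dots,\lambda_m)$ is a KKT multiplier at $\bar x$. Then $\bar S\subseteq X_1(\lambda)$, and the Lagrangian $L(\cdot)=f(\cdot)+\sum_{i\in I(\bar x)}\lambda_i g_i(\cdot)$ is constant on $\bar S$.
   Context: Quasiconvexity on $\Gamma$: $f(x+t(y-x))\le\max\{f(x),f(y)\}$ for all $x,y\in\Gamma$, $t\in[0,1]$. Feasible set $S:=\{x\in X\mid g_i(x)\le0,\ i=1,\dots,m\}$; $\bar S$ the set of global minimizers of $f$ on $S$. Active index set $I(x):=\{i\mid g_i(x)=0\}$. For a cone $C$, its negative polar is $C^*:=\{x\in\mathbb R^n\mid c^Tx\le 0\ \forall c\in C\}$; $T_X(x)$ is the tangent cone of $X$ at $x$ and $N_X(x):=(T_X(x))^*$ is the normal cone. GMFCQ holds at $\bar x$ iff there is $y\in (N_X(\bar x))^*$ with $\nabla g_i(\bar x)^Ty<0$ for all $i\in I(\bar x)$. A KKT multiplier at $\bar x$ is $\lambda\in\mathbb R^m$ with $\lambda_i\ge0$ for all $i$, $\lambda_ig_i(\bar x)=0$ for all $i$, and $\big[\nabla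 f(\bar x)+\sum_{i\in I(\bar x)}\lambda_i\nabla g_i(\bar x)\big]^T(x-\bar x)\ge0$ for all $x\in X$. Define $\tilde I(\bar x,\lambda):=\{i\mid g_i(\bar x)=0,\ \lambda_i>0\}$ and $X_1(\lambda):=\{x\in X\mid g_i(x)=0\ \forall i\in\tilde I(\bar x,\lambda),\ g_i(x)\le0\ \forall i\notin\tilde I(\bar x,\lambda)\}$. *)

theory Defs
  imports "HOL-Analysis.Analysis"
begin

definition quasiconvex_on :: "'a::real_vector set \<Rightarrow> ('a \<Rightarrow> real) \<Rightarrow> bool" where
  "quasiconvex_on \<Gamma> f \<longleftrightarrow>
     (\<forall>x\<in>\<Gamma>. \<forall>y\<in>\<Gamma>. \<forall>t::real. 0 \<le> t \<and> t \<le> 1 \<longrightarrow> f (x + t *\<^sub>R (y - x)) \<le> max (f x) (f y))"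

definition polar_cone :: "'a::real_inner set \<Rightarrow> 'a set" where
  "polar_cone C = {x. \<forall>c\<in>C. c \<bullet> x \<le> 0}"

definition tangent_cone :: "'a::real_normed_vector set \<Rightarrow> 'a \<Rightarrow> 'a set" where
  "tangent_cone X x = {d. \<exists>t u. (\<forall>k. t k > (0::real)) \<and> t \<longlonglongrightarrow> 0 \<and> u \<longlonglongrightarrow> d \<and>
                             (\<forall>k. x + t k *\<^sub>R u k \<in> X)}"

definition normal_cone :: "'a::real_inner set \<Rightarrow> 'a \<Rightarrow> 'a set" where
  "normal_cone X x = polar_cone (tangent_cone X x)"

definition feasible_set :: "'a set \<Rightarrow> nat \<Rightarrow> (nat \<Rightarrow> 'a \<Rightarrow> real) \<Rightarrow> 'a set" where
  "feasible_set X m g = {x\<in>X. \<forall>i\<in>{1..m}. g i x \<le> 0}"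

definition solution_set :: "('a \<Rightarrow> real) \<Rightarrow> 'a set \<Rightarrow> nat \<Rightarrow> (nat \<Rightarrow> 'a \<Rightarrow> real) \<Rightarrow> 'a set" where
  "solution_set f X m g = {x\<in>feasible_set X m g. \<forall>y\<in>feasible_set X m g. f x \<le> f y}"

definition active_set :: "nat \<Rightarrow> (nat \<Rightarrow> 'a \<Rightarrow> real) \<Rightarrow> 'a \<Rightarrow> nat set" where
  "active_set m g x = {i\<in>{1..m}. g i x = 0}"

text \<open>GMFCQ at xb, with dg i the gradient of g i.\<close>
definition GMFCQ :: "'a::real_inner set \<Rightarrow> nat \<Rightarrow> (nat \<Rightarrow> 'a \<Rightarrow> real) \<Rightarrow> (nat \<Rightarrow> 'a \<Rightarrow> 'a) \<Rightarrow> 'a \<Rightarrow> bool" where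
  "GMFCQ X m g dg xb \<longleftrightarrow>
     (\<exists>y\<in>polar_cone (normal_cone X xb). \<forall>i\<in>active_set m g xb. dg i xb \<bullet> y < 0)"

text \<open>KKT multiplier at xb; df, dg are the gradients of f, g i.\<close>
definition KKT_multiplier ::
  "'a::real_inner set \<Rightarrow> nat \<Rightarrow> ('a \<Rightarrow> 'a) \<Rightarrow> (nat \<Rightarrow> 'a \<Rightarrow> real) \<Rightarrow> (nat \<Rightarrow> 'a \<Rightarrow> 'a) \<Rightarrow> 'a \<Rightarrow> (nat \<Rightarrow> real) \<Rightarrow> bool" where
  "KKT_multiplier X m df g dg xb lam \<longleftrightarrow>
     (\<forall>i\<in>{1..m}. lam i \<ge> 0) \<and> (\<forall>i\<in>{1..m}. lam i * g i xb = 0) \<and>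
     (\<forall>x\<in>X. (df xb + (\<Sum>i\<in>active_set m g xb. lam i *\<^sub>R dg i xb)) \<bullet> (x - xb) \<ge> 0)"

definition Itilde :: "nat \<Rightarrow> (nat \<Rightarrow> 'a \<Rightarrow> real) \<Rightarrow> 'a \<Rightarrow> (nat \<Rightarrow> real) \<Rightarrow> nat set" where
  "Itilde m g xb lam = {i\<in>{1..m}. g i xb = 0 \<and> lam i > 0}"

definition X1 :: "'a set \<Rightarrow> nat \<Rightarrow> (nat \<Rightarrow> 'a \<Rightarrow> real) \<Rightarrow> 'a \<Rightarrow> (nat \<Rightarrow> real) \<Rightarrow> 'a set" where
  "X1 X m g xb lam = {x\<in>X. (\<forall>i\<in>Itilde m g xb lam. g i x = 0) \<and>
                           (\<forall>i\<in>{1..m} - Itilde m g xb lam. g i x \<le> 0)}"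

end

theory Submission
  imports Defs
begin

text \<open>
  For a differentiable quasiconvex \<open>g\<close>, \<open>g y \<le> g z\<close> forces \<open>\<nabla>g(z) \<bullet> (y - z) \<le> 0\<close>.
  If \<open>x\<close> and \<open>xb\<close> both solve the problem then \<open>f x = f xb\<close>, so the gradients of \<open>f\<close>
  and of the active constraints at \<open>xb\<close> all make a nonpositive product with \<open>x - xb\<close>;
  the KKT inequality then forces \<open>\<nabla>g\<^sub>k(xb) \<bullet> (x - xb) = 0\<close> whenever \<open>\<lambda>\<^sub>k > 0\<close>.
  Were \<open>g\<^sub>k x < 0\<close>, the same inequality at the nearby points \<open>x + t \<nabla>g\<^sub>k(xb)\<close>, still in
  the strict sublevel set, would give \<open>t \<parallel>\<nabla>g\<^sub>k(xb)\<parallel>\<^sup>2 \<le> 0\<close>, i.e. \<open>\<nabla>g\<^sub>k(xb) = 0\<close>,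
  which GMFCQ excludes. So \<open>g\<^sub>k\<close> vanishes on the solution set, where the Lagrangian
  therefore equals \<open>f xb\<close>.
\<close>

lemma quasiconvex_on_gderiv_nonpos:
  fixes g :: "'a::real_inner \<Rightarrow> real"
  assumes qc: "quasiconvex_on \<Gamma> g" and der: "GDERIV g z :> D"
    and y: "y \<in> \<Gamma>" and z: "z \<in> \<Gamma>" and le: "g y \<le> g z"
  shows "D \<bullet> (y - z) \<le> 0"
proof (rule ccontr)
  assume "\<not> D \<bullet> (y - z) \<le> 0"
  hence pos: "0 < D \<bullet> (y - z)" by simp
  have "((\<lambda>t::real. z + t *\<^sub>R (y - z)) has_derivative (\<lambda>t. t *\<^sub>R (y - z))) (at 0)"
    by (auto intro!: derivative_eq_intros)
  from diff_chain_at[OF this, of g "\<lambda>h. h \<bullet> D"] der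
  have "DERIV (\<lambda>t. g (z + t *\<^sub>R (y - z))) 0 :> D \<bullet> (y - z)"
    by (simp add: gderiv_def has_field_derivative_def o_def inner_commute mult_commute_abs)
  from DERIV_pos_inc_right[OF this pos] obtain d where d: "d > 0"
    and inc: "\<And>h. 0 < h \<Longrightarrow> h < d \<Longrightarrow> g z < g (z + h *\<^sub>R (y - z))"
    by auto
  define h where "h = min (d/2) 1"
  have h: "0 < h" "h < d" "h \<le> 1" using d by (auto simp: h_def)
  have "g (z + h *\<^sub>R (y - z)) \<le> max (g z) (g y)"
    using qc y z h unfolding quasiconvex_on_def by auto
  with inc[OF h(1,2)] le show False by simp
qed

lemma quasiconvex_on_gderiv_eq_0:
  fixes g :: "'a::real_inner \<Rightarrow> real"
  assumes "open \<Gamma>" and qc: "quasiconvex_on \<Gamma> g" and der: "GDERIV g z :> D"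
    and cont: "isCont g x" and x: "x \<in> \<Gamma>" and z: "z \<in> \<Gamma>"
    and less: "g x < g z" and nonneg: "0 \<le> D \<bullet> (x - z)"
  shows "D = 0"
proof (rule ccontr)
  assume "D \<noteq> 0"
  hence "0 < D \<bullet> D" by simp
  have "((\<lambda>t. x + t *\<^sub>R D) \<longlongrightarrow> x + 0 *\<^sub>R D) (at_right 0)"
    by (intro tendsto_intros)
  hence ray: "((\<lambda>t. x + t *\<^sub>R D) \<longlongrightarrow> x) (at_right 0)" by simp
  have "\<forall>\<^sub>F t in at_right 0. 0 < t \<and> g (x + t *\<^sub>R D) < g z \<and> x + t *\<^sub>R D \<in> \<Gamma>"
    using eventually_at_right_less
      order_tendstoD(2)[OF isCont_tendsto_compose[OF cont ray] less]
      topological_tendstoD[OF ray \<open>open \<Gamma>\<close> x]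
    by (intro eventually_conj)
  then obtain t where t: "0 < t" "g (x + t *\<^sub>R D) < g z" "x + t *\<^sub>R D \<in> \<Gamma>"
    using eventually_happens' trivial_limit_at_right_real by blast
  have "D \<bullet> (x + t *\<^sub>R D - z) \<le> 0"
    using quasiconvex_on_gderiv_nonpos[OF qc der t(3) z] t(2) by simp
  moreover have "D \<bullet> (x + t *\<^sub>R D - z) = D \<bullet> (x - z) + t * (D \<bullet> D)"
    by (simp add: inner_diff_right inner_add_right)
  moreover have "0 < t * (D \<bullet> D)"
    using t(1) \<open>0 < D \<bullet> D\<close> by simp
  ultimately show False
    using nonneg by linarith
qed

lemma nonneg_combination_of_nonpos_eq_0:
  fixes a :: real
  assumes "finite A" and "k \<in> A" and "0 < lam k"
    and "\<forall>i\<in>A. 0 \<le> lam i" and "\<forall>i\<in>A. b i \<le> 0"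
    and "a \<le> 0" and "0 \<le> a + (\<Sum>i\<in>A. lam i * b i)"
  shows "b k = 0"
proof -
  have terms_nonneg: "\<And>i. i \<in> A \<Longrightarrow> 0 \<le> - (lam i * b i)"
    using assms(4,5) by (simp add: mult_nonneg_nonpos)
  have "0 \<le> (\<Sum>i\<in>A. - (lam i * b i))"
    using terms_nonneg by (rule sum_nonneg)
  with assms(6,7) have "(\<Sum>i\<in>A. - (lam i * b i)) = 0"
    by (simp add: sum_negf)
  with assms(1,2) terms_nonneg have "- (lam k * b k) = 0"
    by (simp add: sum_nonneg_eq_0_iff)
  with assms(3) show ?thesis by simp
qed

lemma solution_set_value_eq:
  assumes "x \<in> solution_set f X m g" and "xb \<in> solution_set f X m g"
  shows "f x = f xb"
  using assms unfolding solution_set_def by (auto intro: antisym)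

lemma KKT_multiplier_positive_constraint_vanishes_on_solution_set:
  fixes \<Gamma> X :: "'a::real_inner set" and g :: "nat \<Rightarrow> 'a \<Rightarrow> real"
  assumes "open \<Gamma>" and "X \<subseteq> \<Gamma>"
    and df: "\<And>x. x \<in> \<Gamma> \<Longrightarrow> GDERIV f x :> df x"
    and dg: "\<And>i x. i \<in> {1..m} \<Longrightarrow> x \<in> \<Gamma> \<Longrightarrow> GDERIV (g i) x :> dg i x"
    and qf: "quasiconvex_on \<Gamma> f"
    and qg: "\<And>i. i \<in> {1..m} \<Longrightarrow> quasiconvex_on \<Gamma> (g i)"
    and xb: "xb \<in> solution_set f X m g" and x: "x \<in> solution_set f X m g"
    and "GMFCQ X m g dg xb" and kkt: "KKT_multiplier X m df g dg xb lam"
    and k: "k \<in> Itilde m g xb lam"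
  shows "g k x = 0"
proof (rule ccontr)
  assume "g k x \<noteq> 0"
  let ?A = "active_set m g xb"
  have km: "k \<in> {1..m}" and kA: "k \<in> ?A" and "0 < lam k"
    using k unfolding Itilde_def active_set_def by auto
  have xX: "x \<in> X" and x_feasible: "\<forall>i\<in>{1..m}. g i x \<le> 0"
    using x unfolding solution_set_def feasible_set_def by auto
  have xG: "x \<in> \<Gamma>" and xbG: "xb \<in> \<Gamma>"
    using xX xb \<open>X \<subseteq> \<Gamma>\<close> unfolding solution_set_def feasible_set_def by auto
  have f_dir: "df xb \<bullet> (x - xb) \<le> 0"
    using quasiconvex_on_gderiv_nonpos[OF qf df[OF xbG] xG xbG]
      solution_set_value_eq[OF x xb] by simp
  have g_dir: "\<forall>i\<in>?A. dg i xb \<bullet> (x - xb) \<le> 0"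
  proof
    fix i assume "i \<in> ?A"
    hence i: "i \<in> {1..m}" "g i xb = 0" unfolding active_set_def by auto
    with x_feasible show "dg i xb \<bullet> (x - xb) \<le> 0"
      using quasiconvex_on_gderiv_nonpos[OF qg[OF i(1)] dg[OF i(1) xbG] xG xbG] by auto
  qed
  have combination: "0 \<le> df xb \<bullet> (x - xb) + (\<Sum>i\<in>?A. lam i * (dg i xb \<bullet> (x - xb)))"
    using kkt xX unfolding KKT_multiplier_def by (simp add: inner_add_left inner_sum_left)
  have "finite ?A" and lam_nonneg: "\<forall>i\<in>?A. 0 \<le> lam i"
    using kkt unfolding active_set_def KKT_multiplier_def by auto
  from nonneg_combination_of_nonpos_eq_0[OF this(1) kA \<open>0 < lam k\<close> lam_nonneg g_dir f_dir combination]
  have "dg k xb \<bullet> (x - xb) = 0" .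
  moreover have "isCont (g k) x"
    using dg[OF km xG] by (simp add: gderiv_def has_derivative_continuous)
  moreover have "g k x < g k xb"
    using \<open>g k x \<noteq> 0\<close> x_feasible km kA unfolding active_set_def by force
  ultimately have "dg k xb = 0"
    using quasiconvex_on_gderiv_eq_0[OF \<open>open \<Gamma>\<close> qg[OF km] dg[OF km xbG] _ xG xbG] by simp
  with \<open>GMFCQ X m g dg xb\<close> kA show False
    unfolding GMFCQ_def by auto
qed

theorem lemma7:
  fixes \<Gamma> X :: "'a::euclidean_space set"
    and f :: "'a \<Rightarrow> real" and df :: "'a \<Rightarrow> 'a"
    and m :: nat and g :: "nat \<Rightarrow> 'a \<Rightarrow> real" and dg :: "nat \<Rightarrow> 'a \<Rightarrow> 'a"
    and xb :: 'a and lam :: "nat \<Rightarrow> real"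
  assumes "open \<Gamma>" and "convex \<Gamma>" and "X \<subseteq> \<Gamma>" and "convex X"
    and "\<And>x. x \<in> \<Gamma> \<Longrightarrow> GDERIV f x :> df x"
    and "\<And>i x. i \<in> {1..m} \<Longrightarrow> x \<in> \<Gamma> \<Longrightarrow> GDERIV (g i) x :> dg i x"
    and "quasiconvex_on \<Gamma> f"
    and "\<And>i. i \<in> {1..m} \<Longrightarrow> quasiconvex_on \<Gamma> (g i)"
    and "xb \<in> solution_set f X m g"
    and "GMFCQ X m g dg xb"
    and "KKT_multiplier X m df g dg xb lam"
  shows "solution_set f X m g \<subseteq> X1 X m g xb lam \<and>
         (\<exists>c. \<forall>x\<in>solution_set f X m g. f x + (\<Sum>i\<in>active_set m g xb. lam i * g i x) = c)"
proof -
  have vanish: "g k x = 0" if "x \<in> solution_set f X m g" and "k \<in> Itilde m g xb lam" for x k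
    using KKT_multiplier_positive_constraint_vanishes_on_solution_set[OF
        assms(1,3,5,6,7,8,9) that(1) assms(10,11) that(2)] .
  have "solution_set f X m g \<subseteq> X1 X m g xb lam"
  proof
    fix x assume "x \<in> solution_set f X m g"
    with vanish[OF this] show "x \<in> X1 X m g xb lam"
      unfolding X1_def solution_set_def feasible_set_def by blast
  qed
  moreover have "f x + (\<Sum>i\<in>active_set m g xb. lam i * g i x) = f xb"
    if x: "x \<in> solution_set f X m g" for x
  proof -
    have "lam i * g i x = 0" if "i \<in> active_set m g xb" for i
    proof (cases "lam i > 0")
      case True
      with that have "i \<in> Itilde m g xb lam" unfolding active_set_def Itilde_def by auto
      with vanish[OF x] show ?thesis by simp
    next
      case False
      moreover have "0 \<le> lam i"
        using that assms(11) unfolding active_set_def KKT_multiplier_def by simp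
      ultimately have "lam i = 0" by simp
      then show ?thesis by simp
    qed
    then have "(\<Sum>i\<in>active_set m g xb. lam i * g i x) = 0"
      by (rule sum.neutral[rule_format])
    with solution_set_value_eq[OF x assms(9)] show ?thesis by simp
  qed
  ultimately show ?thesis by blast
qed

end
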